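(* As $v\to\infty$, $f'(v)\ge(1+o(1))v^2/12$; consequently, as $t\to\infty$, $f(t)\le(\sqrt{12}+o(1))\sqrt{t}$.
   Context: For $[k]=\{0,\dots,k-1\}$ and $K\ge k$, the addition table of $[k]$ as a subset of $\mathbb{Z}_K$ is the set of triples (faces) $(a,b,a+b\bmod K)$, $a,b\in[k]$, viewed as a tripartite 3-uniform hypergraph whose vertices are rows, columns and labels (three disjoint vertex classes). A set of vertices spans a face if all three vertices of the face are in the set. $f'(v)$ is the maximal number of faces that can be spanned by a set of $v$ vertices in the addition table of $[k]\subset\mathbb{Z}_K$, for any $K\ge k$ with $k$ sufficiently large compared to $v$. An $(r,s)$-configuration is a collection of $s$ faces involving at most $r$ vertices in total. $f(t)$ is the least integer $r$ such that the addition table of $[k]\subset\mathbb{Z}_K$ contains an $(r,t)$-configuration for all $K\ge k$ with $k$ sufficiently large compared to $t$. *)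

theory Defs
  imports Complex_Main
begin

text \<open>Vertices of the tripartite 3-uniform hypergraph given by the addition table
  of [k] = {0..k-1} as a subset of Z_K: rows, columns and labels are three
  disjoint vertex classes.\<close>
datatype vtx = Row nat | Col nat | Lab nat

definition table_vertices :: "nat \<Rightarrow> nat \<Rightarrow> vtx set" where
  "table_vertices k K = Row ` {..<k} \<union> Col ` {..<k} \<union> Lab ` {..<K}"

text \<open>The faces of the addition table are the triples (a, b, (a+b) mod K), a,b < k;
  a face is determined by (a,b).  Number of faces spanned by a vertex set S.\<close>
definition spanned_faces :: "nat \<Rightarrow> nat \<Rightarrow> vtx set \<Rightarrow> nat" where
  "spanned_faces k K S =
     card {(a, b). a < k \<and> b < k \<and> Row a \<in> S \<and> Col b \<in> S \<and> Lab ((a + b) mod K) \<in> S}"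

definition has_config :: "nat \<Rightarrow> nat \<Rightarrow> nat \<Rightarrow> nat \<Rightarrow> bool" where
  "has_config k K r s \<longleftrightarrow>
     (\<exists>S. S \<subseteq> table_vertices k K \<and> card S \<le> r \<and> s \<le> spanned_faces k K S)"

definition f_prime :: "nat \<Rightarrow> nat" where
  "f_prime v = (GREATEST s. \<exists>k0. \<forall>k\<ge>k0. \<forall>K\<ge>k. has_config k K v s)"

definition f_conf :: "nat \<Rightarrow> nat" where
  "f_conf t = (LEAST r. \<exists>k0. \<forall>k\<ge>k0. \<forall>K\<ge>k. has_config k K r t)"

end

theory Submission
  imports Defs
begin

text \<open>Take the rows and columns \<open>{0..<2p}\<close> and the labels \<open>{p..<3p}\<close>: these \<open>6p\<close> vertices
  span every face \<open>(a, b)\<close> with \<open>p \<le> a + b < 3p\<close>, a hexagon of \<open>3p\<^sup>2\<close> cells, and no sum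
  wraps around modulo \<open>K\<close> once \<open>3p \<le> k \<le> K\<close>. Taking \<open>p = v div 6\<close> gives
  \<open>f'(v) \<ge> 3(v div 6)\<^sup>2 \<sim> v\<^sup>2/12\<close>, and taking \<open>p = \<lceil>sqrt (t/3)\<rceil>\<close> gives
  \<open>f(t) \<le> 6p \<sim> sqrt 12 * sqrt t\<close>. Since \<open>v\<close> vertices span at most \<open>v\<^sup>2\<close> faces, \<open>f'(v)\<close> is a
  genuine maximum.\<close>

lemma card_hexagon:
  "card {(a, b). a < 2*p \<and> b < 2*p \<and> p \<le> a + b \<and> a + b < 3*p} = 3 * p\<^sup>2"
proof -
  define B where "B = (\<lambda>a::nat. if a < p then {p - a..<2*p} else {..<3*p - a})"
  have "{(a, b). a < 2*p \<and> b < 2*p \<and> p \<le> a + b \<and> a + b < 3*p} = Sigma {..<2*p} B"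
    unfolding B_def by (auto split: if_splits)
  moreover have "card (Sigma {..<2*p} B) = (\<Sum>a<2*p. card (B a))"
    by (rule card_SigmaI) (auto simp: B_def)
  moreover have "(\<Sum>a<2*p. card (B a)) = (\<Sum>a<p. card (B a)) + (\<Sum>a\<in>{p..<2*p}. card (B a))"
    by (metis lessThan_atLeast0 mult_2 le_add1 sum.atLeastLessThan_concat zero_le)
  moreover have "(\<Sum>a<p. card (B a)) = (\<Sum>a<p. p + a)"
    by (rule sum.cong) (auto simp: B_def)
  moreover have "(\<Sum>a\<in>{p..<2*p}. card (B a)) = (\<Sum>j<p. 2*p - j)"
  proof -
    have "(\<Sum>a\<in>{p..<2*p}. card (B a)) = (\<Sum>j<p. card (B (j + p)))"
      by (rule sum.reindex_bij_witness[of _ "\<lambda>j. j + p" "\<lambda>a. a - p"]) auto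
    also have "\<dots> = (\<Sum>j<p. 2*p - j)"
      by (rule sum.cong) (auto simp: B_def)
    finally show ?thesis .
  qed
  moreover have "(\<Sum>a<p. p + a) + (\<Sum>j<p. 2*p - j) = (\<Sum>j<p. 3*p)"
    by (subst sum.distrib[symmetric]) (rule sum.cong, auto)
  ultimately show ?thesis by (simp add: power2_eq_square)
qed

lemma has_config_hexagon:
  assumes "3*p \<le> k" "k \<le> K" "6*p \<le> r" "s \<le> 3 * p\<^sup>2"
  shows "has_config k K r s"
proof -
  define S where "S = Row ` {..<2*p} \<union> Col ` {..<2*p} \<union> Lab ` {p..<3*p}"
  have "S \<subseteq> table_vertices k K"
    using assms unfolding S_def table_vertices_def by auto
  moreover have "card S \<le> r"
  proof -
    have "card S \<le> card (Row ` {..<2*p}) + card (Col ` {..<2*p}) + card (Lab ` {p..<3*p})"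
      unfolding S_def by (meson card_Un_le add_right_mono le_trans)
    moreover have "card (Row ` {..<2*p}) \<le> 2*p"
      using card_image_le[of "{..<2*p}" Row] by simp
    moreover have "card (Col ` {..<2*p}) \<le> 2*p"
      using card_image_le[of "{..<2*p}" Col] by simp
    moreover have "card (Lab ` {p..<3*p}) \<le> 2*p"
      using card_image_le[of "{p..<3*p}" Lab] by simp
    ultimately show ?thesis using assms(3) by linarith
  qed
  moreover have "3 * p\<^sup>2 \<le> spanned_faces k K S"
  proof -
    let ?F = "{(a, b). a < k \<and> b < k \<and> Row a \<in> S \<and> Col b \<in> S \<and> Lab ((a + b) mod K) \<in> S}"
    have "{(a, b). a < 2*p \<and> b < 2*p \<and> p \<le> a + b \<and> a + b < 3*p} \<subseteq> ?F"
      using assms unfolding S_def by auto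
    moreover have "finite ?F"
      by (rule finite_subset[of _ "{..<k} \<times> {..<k}"]) auto
    ultimately show ?thesis
      unfolding spanned_faces_def card_hexagon[symmetric] by (simp add: card_mono)
  qed
  ultimately show ?thesis
    unfolding has_config_def using assms(4) by auto
qed

lemma spanned_faces_le_square:
  assumes "S \<subseteq> table_vertices k K" "card S \<le> v"
  shows "spanned_faces k K S \<le> v * v"
proof -
  have "finite S"
    using assms(1) finite_subset unfolding table_vertices_def by blast
  have card_class: "card {a. C a \<in> S} \<le> v" "finite {a. C a \<in> S}" if "inj C" for C :: "nat \<Rightarrow> vtx"
  proof -
    have "card {a. C a \<in> S} = card (C ` {a. C a \<in> S})"
      using that by (simp add: card_image inj_on_def inj_def)
    also have "\<dots> \<le> card S" by (rule card_mono[OF \<open>finite S\<close>]) auto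
    finally show "card {a. C a \<in> S} \<le> v" using assms(2) by linarith
    show "finite {a. C a \<in> S}"
      using finite_vimageI[OF \<open>finite S\<close> that] by (simp add: vimage_def)
  qed
  have "spanned_faces k K S \<le> card ({a. Row a \<in> S} \<times> {a. Col a \<in> S})"
    unfolding spanned_faces_def
    by (rule card_mono) (use card_class[of Row] card_class[of Col] in \<open>auto simp: inj_def\<close>)
  also have "\<dots> \<le> v * v"
    using card_class[of Row] card_class[of Col] by (simp add: inj_def card_cartesian_product mult_le_mono)
  finally show ?thesis .
qed

lemma f_prime_ge: "3 * (v div 6)\<^sup>2 \<le> f_prime v"
proof -
  let ?P = "\<lambda>s. \<exists>k0. \<forall>k\<ge>k0. \<forall>K\<ge>k. has_config k K v s"
  have "?P (3 * (v div 6)\<^sup>2)"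
    by (rule exI[of _ "3 * (v div 6)"]) (auto intro!: has_config_hexagon)
  moreover have "s \<le> v * v" if "?P s" for s
  proof -
    from that obtain k0 where "has_config k0 k0 v s" by blast
    then show ?thesis
      unfolding has_config_def using spanned_faces_le_square le_trans by blast
  qed
  ultimately show ?thesis
    unfolding f_prime_def by (rule Greatest_le_nat)
qed

lemma f_conf_le: "t \<le> 3 * p\<^sup>2 \<Longrightarrow> f_conf t \<le> 6 * p"
  unfolding f_conf_def
  by (rule Least_le) (rule exI[of _ "3 * p"], auto intro!: has_config_hexagon)

lemma f_conf_le_ceiling_sqrt: "real (f_conf t) \<le> 6 * real (nat \<lceil>sqrt (real t / 3)\<rceil>)"
proof -
  define p where "p = nat \<lceil>sqrt (real t / 3)\<rceil>"
  have "sqrt (real t / 3) \<le> real p"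
    unfolding p_def by (rule real_nat_ceiling_ge)
  then have "(sqrt (real t / 3))\<^sup>2 \<le> (real p)\<^sup>2"
    by (intro power_mono) auto
  moreover have "real t = 3 * (sqrt (real t / 3))\<^sup>2" by simp
  ultimately have "real t \<le> 3 * (real p)\<^sup>2" by linarith
  then have "t \<le> 3 * p\<^sup>2" by (metis of_nat_le_iff of_nat_mult of_nat_numeral of_nat_power)
  then show ?thesis
    using f_conf_le unfolding p_def by (metis of_nat_le_iff of_nat_mult of_nat_numeral)
qed

lemma eventually_square_le_div6_square:
  assumes "\<epsilon> > 0"
  shows "\<forall>\<^sub>F v in sequentially. (1 - \<epsilon>) * (real v)\<^sup>2 / 12 \<le> 3 * (real (v div 6))\<^sup>2"
proof -
  have "\<forall>\<^sub>F v in sequentially. 10 / \<epsilon> + 5 \<le> real v"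
    using filterlim_real_sequentially by (simp add: filterlim_at_top)
  then show ?thesis
  proof (rule eventually_mono)
    fix v :: nat assume v: "10 / \<epsilon> + 5 \<le> real v"
    then have "10 \<le> \<epsilon> * real v"
      using assms by (simp add: field_simps)
    have "(1 - \<epsilon>) * (real v)\<^sup>2 = (real v)\<^sup>2 - (\<epsilon> * real v) * real v"
      by (simp add: power2_eq_square algebra_simps)
    also have "\<dots> \<le> (real v)\<^sup>2 - 10 * real v"
      using \<open>10 \<le> \<epsilon> * real v\<close> by (simp add: mult_right_mono)
    also have "\<dots> \<le> (real v - 5)\<^sup>2" by (simp add: power2_eq_square algebra_simps)
    also have "\<dots> \<le> (6 * real (v div 6))\<^sup>2"
    proof (rule power_mono)
      have "v \<le> 6 * (v div 6) + 5" by linarith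
      then show "real v - 5 \<le> 6 * real (v div 6)" by linarith
      show "0 \<le> real v - 5"
        using v assms divide_pos_pos[of 10 \<epsilon>] by linarith
    qed
    finally show "(1 - \<epsilon>) * (real v)\<^sup>2 / 12 \<le> 3 * (real (v div 6))\<^sup>2"
      by (simp add: power_mult_distrib)
  qed
qed

lemma eventually_ceiling_sqrt_le:
  assumes "\<epsilon> > 0"
  shows "\<forall>\<^sub>F t in sequentially.
           6 * real (nat \<lceil>sqrt (real t / 3)\<rceil>) \<le> (sqrt 12 + \<epsilon>) * sqrt (real t)"
proof -
  have "\<forall>\<^sub>F t in sequentially. 36 / \<epsilon>\<^sup>2 \<le> real t"
    using filterlim_real_sequentially by (simp add: filterlim_at_top)
  then show ?thesis
  proof (rule eventually_mono)
    fix t :: nat assume t: "36 / \<epsilon>\<^sup>2 \<le> real t"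
    have "6 \<le> \<epsilon> * sqrt (real t)"
    proof -
      have "6 / \<epsilon> = sqrt (36 / \<epsilon>\<^sup>2)" using assms by (simp add: real_sqrt_divide)
      also have "\<dots> \<le> sqrt (real t)" using t by (rule real_sqrt_le_mono)
      finally show ?thesis using assms by (simp add: field_simps)
    qed
    moreover have "6 * sqrt (real t / 3) = sqrt 12 * sqrt (real t)"
    proof -
      have "6 * sqrt (real t / 3) = sqrt 36 * sqrt (real t / 3)" by simp
      also have "\<dots> = sqrt (12 * real t)" by (simp only: real_sqrt_mult[symmetric]) simp
      also have "\<dots> = sqrt 12 * sqrt (real t)" by (simp add: real_sqrt_mult)
      finally show ?thesis .
    qed
    moreover have "real (nat \<lceil>sqrt (real t / 3)\<rceil>) \<le> sqrt (real t / 3) + 1"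
      using of_int_ceiling_le_add_one[of "sqrt (real t / 3)"] by simp
    ultimately show "6 * real (nat \<lceil>sqrt (real t / 3)\<rceil>) \<le> (sqrt 12 + \<epsilon>) * sqrt (real t)"
      by (simp add: algebra_simps)
  qed
qed

theorem proposition1:
  shows "(\<forall>\<epsilon>>0. \<forall>\<^sub>F v in sequentially.
            real (f_prime v) \<ge> (1 - \<epsilon>) * (real v)\<^sup>2 / 12)
       \<and> (\<forall>\<epsilon>>0. \<forall>\<^sub>F t in sequentially.
            real (f_conf t) \<le> (sqrt 12 + \<epsilon>) * sqrt (real t))"
proof (intro conjI allI impI)
  fix \<epsilon> :: real assume "\<epsilon> > 0"
  have lower: "3 * (real (v div 6))\<^sup>2 \<le> real (f_prime v)" for v
    using f_prime_ge[of v] by (metis of_nat_le_iff of_nat_mult of_nat_numeral of_nat_power)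
  show "\<forall>\<^sub>F v in sequentially. real (f_prime v) \<ge> (1 - \<epsilon>) * (real v)\<^sup>2 / 12"
    using eventually_square_le_div6_square[OF \<open>\<epsilon> > 0\<close>]
    by (rule eventually_mono) (use lower order_trans in blast)
next
  fix \<epsilon> :: real assume "\<epsilon> > 0"
  show "\<forall>\<^sub>F t in sequentially. real (f_conf t) \<le> (sqrt 12 + \<epsilon>) * sqrt (real t)"
    using eventually_ceiling_sqrt_le[OF \<open>\<epsilon> > 0\<close>]
    by (rule eventually_mono) (use f_conf_le_ceiling_sqrt order_trans in blast)
qed

end
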